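(* Let $m\ge1$ be an integer, let $\delta>1$ be the positive root of $x^2-(m+1)x-1$, and let $\boldsymbol{\beta}=(\beta_1,\beta_2)$ with $\beta_1=\frac{\delta}{\delta-1}$ and $\beta_2=\delta-1$. Then every rational number in $[0,1)$ has a purely periodic $\boldsymbol{\beta}$-expansion; in particular $\gamma(\boldsymbol{\beta})=1$.
   Context: An alternate base $(\beta_1,\dots,\beta_p)$ ($\beta_i>1$) is identified with the purely periodic sequence $(\beta_k)_{k\ge1}$, $\beta_{k+p}=\beta_k$. For $x\in[0,1)$ the $\boldsymbol{\beta}$-expansion $d_{\boldsymbol{\beta}}(x)=a_1a_2\cdots$ is given by the greedy algorithm $r_0=x$, $a_{k+1}=\lfloor\beta_{k+1}r_k\rfloor$, $r_{k+1}=\beta_{k+1}r_k-a_{k+1}$. The base has Property (PP) if there is $\gamma>0$ such that $d_{\boldsymbol{\beta}}(x)$ is purely periodic for all rational $x\in[0,\gamma)$; $\gamma(\boldsymbol{\beta})$ denotes the supremum of all such $\gamma$ (with $\gamma\le1$). *)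

theory Defs
  imports Complex_Main
begin

text \<open>An alternate base is a sequence b :: nat \<Rightarrow> real, where b k is beta_k for k \<ge> 1
  (the value at index 0 is irrelevant); it is purely periodic with period p.\<close>

fun alt_rem :: "(nat \<Rightarrow> real) \<Rightarrow> real \<Rightarrow> nat \<Rightarrow> real" where
  "alt_rem b x 0 = x"
| "alt_rem b x (Suc k) = b (Suc k) * alt_rem b x k - of_int \<lfloor>b (Suc k) * alt_rem b x k\<rfloor>"

text \<open>Digits a_(k+1) = floor(beta_(k+1) r_k); a_k is meaningful for k \<ge> 1.\<close>

definition alt_digit :: "(nat \<Rightarrow> real) \<Rightarrow> real \<Rightarrow> nat \<Rightarrow> int" where
  "alt_digit b x k = \<lfloor>b k * alt_rem b x (k - 1)\<rfloor>"

definition purely_periodic_exp :: "(nat \<Rightarrow> real) \<Rightarrow> real \<Rightarrow> bool" where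
  "purely_periodic_exp b x \<longleftrightarrow>
     (\<exists>q\<ge>1. \<forall>k\<ge>1. alt_digit b x (k + q) = alt_digit b x k)"

definition alt_gamma :: "(nat \<Rightarrow> real) \<Rightarrow> real" where
  "alt_gamma b = Sup {g. 0 < g \<and> g \<le> 1 \<and>
       (\<forall>x\<in>\<rat>. 0 \<le> x \<and> x < g \<longrightarrow> purely_periodic_exp b x)}"

end

theory Submission
  imports Defs
begin

text \<open>Write a rational \<open>x = p/q\<close>. One period of the greedy algorithm (two steps) maps a
  remainder \<open>(S + T\<delta>)/q\<close> with \<open>S, T \<in> \<int>\<close> to another remainder of the same form, so the
  remainders after whole periods stay in \<open>q\<^sup>-\<^sup>1\<int>[\<delta>]\<close>. The Galois conjugate \<open>\<delta>' = -1/\<delta>\<close>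
  of \<open>\<delta>\<close> is contracting, and the conjugates of these remainders stay in a bounded window,
  narrowed by one unit whenever the remainder is at least \<open>1/\<delta>\<close>. Bounding a number of
  \<open>q\<^sup>-\<^sup>1\<int>[\<delta>]\<close> and its conjugate bounds its numerators, so only finitely many states occur;
  the window is tight enough that the period map is injective on them. An injective self-map
  of a finite set is a permutation, hence the orbit of \<open>(p, 0)\<close> returns to its start.\<close>

lemma funpow_returns_if_inj_on_finite:
  assumes fin: "finite S" and maps: "f ` S \<subseteq> S" and inj: "inj_on f S" and x: "x \<in> S"
  shows "\<exists>n\<ge>1. (f ^^ n) x = x"
proof -
  have orbit: "(f ^^ k) x \<in> S" for k
    by (induction k) (use maps x in auto)
  have "\<not> inj (\<lambda>k. (f ^^ k) x)"
  proof
    assume "inj (\<lambda>k. (f ^^ k) x)"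
    moreover have "finite (range (\<lambda>k. (f ^^ k) x))"
      using orbit by (intro finite_subset[OF _ fin]) auto
    ultimately show False
      using finite_imageD infinite_UNIV_nat by blast
  qed
  then obtain i j where "i < j" and repeat: "(f ^^ i) x = (f ^^ j) x"
    unfolding inj_def by (metis linorder_neqE_nat)
  have cancel: "(f ^^ i) x = (f ^^ (i + n)) x \<Longrightarrow> x = (f ^^ n) x" for i n
  proof (induction i)
    case (Suc i)
    then have "f ((f ^^ i) x) = f ((f ^^ (i + n)) x)" by simp
    then show ?case
      using Suc.IH inj_onD[OF inj _ orbit orbit] by blast
  qed simp
  show ?thesis
    using cancel[of i "j - i"] repeat \<open>i < j\<close> by (intro exI[of _ "j - i"]) simp
qed

lemma purely_periodic_exp_if_rem_returns:
  fixes b :: "nat \<Rightarrow> real"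
  assumes "p \<ge> 1" and b_periodic: "\<And>k. b (k + p) = b k" and returns: "alt_rem b x p = x"
  shows "purely_periodic_exp b x"
proof -
  have rem_periodic: "alt_rem b x (k + p) = alt_rem b x k" for k
  proof (induction k)
    case (Suc k)
    then show ?case using b_periodic[of "Suc k"] by simp
  qed (simp add: returns)
  have "alt_digit b x (k + p) = alt_digit b x k" if "k \<ge> 1" for k
  proof -
    have "k + p - 1 = (k - 1) + p" using that by simp
    then show ?thesis
      unfolding alt_digit_def using b_periodic[of k] rem_periodic[of "k - 1"] by simp
  qed
  then show ?thesis
    unfolding purely_periodic_exp_def using \<open>p \<ge> 1\<close> by blast
qed

lemma alt_gamma_eq_1_if_all_rationals_periodic:
  assumes "\<forall>x\<in>\<rat>. 0 \<le> x \<and> x < 1 \<longrightarrow> purely_periodic_exp b x"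
  shows "alt_gamma b = 1"
  unfolding alt_gamma_def by (rule cSup_eq_maximum) (use assms in auto)

locale delta_alt_base =
  fixes m :: nat and \<delta> :: real
  assumes m_ge_1: "m \<ge> 1" and delta_gt_1: "\<delta> > 1"
    and delta_root: "\<delta>\<^sup>2 - (real m + 1) * \<delta> - 1 = 0"
begin

definition beta1 :: real where "beta1 = \<delta> / (\<delta> - 1)"

definition \<delta>' :: real where "\<delta>' = -1 / \<delta>"

text \<open>The window \<open>(lo, hi)\<close> for the conjugate of a remainder; it is determined by
  \<open>hi - lo = \<delta> + 1\<close> and \<open>-lo/\<delta> = hi - 1\<close>, which make it invariant under one period.\<close>

definition hi :: real where "hi = (\<delta> + real m) / (real m + 1)"

definition lo :: real where "lo = - hi / \<delta> - real m"

text \<open>A pair \<open>(S, T)\<close> encodes \<open>(S + T\<delta>)/q\<close>; \<open>val\<close> and \<open>conj_val\<close> are its two real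
  embeddings.\<close>

definition embed :: "real \<Rightarrow> int \<Rightarrow> int \<times> int \<Rightarrow> real" where
  "embed r q P = (of_int (fst P) + of_int (snd P) * r) / of_int q"

abbreviation val :: "int \<Rightarrow> int \<times> int \<Rightarrow> real" where "val \<equiv> embed \<delta>"

abbreviation conj_val :: "int \<Rightarrow> int \<times> int \<Rightarrow> real" where "conj_val \<equiv> embed \<delta>'"

definition digit1 :: "real \<Rightarrow> int" where "digit1 y = \<lfloor>beta1 * y\<rfloor>"

definition digit2 :: "real \<Rightarrow> int" where
  "digit2 y = \<lfloor>(\<delta> - 1) * (beta1 * y - digit1 y)\<rfloor>"

text \<open>One period sends the remainder \<open>y\<close> to \<open>\<delta>y - (\<delta> - 1)a - c\<close> for its digits \<open>a, c\<close>;
  on numerators this is linear thanks to \<open>\<delta>\<^sup>2 = (m + 1)\<delta> + 1\<close>.\<close>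

definition step :: "int \<Rightarrow> int \<times> int \<Rightarrow> int \<times> int" where
  "step q P = (snd P + q * digit1 (val q P) - q * digit2 (val q P),
               fst P + (int m + 1) * snd P - q * digit1 (val q P))"

definition admissible :: "int \<Rightarrow> int \<times> int \<Rightarrow> bool" where
  "admissible q P \<longleftrightarrow> 0 \<le> val q P \<and> val q P < 1 \<and> lo < conj_val q P \<and> conj_val q P < hi
     \<and> (1 / \<delta> \<le> val q P \<longrightarrow> lo + 1 < conj_val q P)"

lemma delta_sq: "\<delta>\<^sup>2 = (real m + 1) * \<delta> + 1"
  using delta_root by simp

lemma delta_eq: "\<delta> = real m + 1 + 1 / \<delta>"
proof -
  have "\<delta> * \<delta> = (real m + 1) * \<delta> + 1" using delta_sq by (simp add: power2_eq_square)
  then show ?thesis using delta_gt_1 by (simp add: field_simps)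
qed

lemma delta_bounds: "real m + 1 < \<delta>" "\<delta> < real m + 2" "2 < \<delta>"
proof -
  have "0 < 1 / \<delta>" "1 / \<delta> < 1" using delta_gt_1 by auto
  then show "real m + 1 < \<delta>" "\<delta> < real m + 2" using delta_eq by linarith+
  then show "2 < \<delta>" using m_ge_1 by linarith
qed

lemma delta_mult_conj: "\<delta> * \<delta>' = -1"
  using delta_gt_1 unfolding \<delta>'_def by simp

lemma conj_neg: "\<delta>' < 0"
  using delta_gt_1 unfolding \<delta>'_def by simp

lemma conj_sq: "\<delta>'\<^sup>2 = (real m + 1) * \<delta>' + 1"
proof -
  have "\<delta>\<^sup>2 * (\<delta>'\<^sup>2 - (real m + 1) * \<delta>' - 1) = (\<delta> * \<delta>')\<^sup>2 - (real m + 1) * (\<delta> * \<delta>') * \<delta> - \<delta>\<^sup>2"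
    by (simp add: algebra_simps power2_eq_square)
  also have "\<dots> = 0" using delta_sq delta_mult_conj by (simp add: algebra_simps)
  finally show ?thesis using delta_gt_1 by simp
qed

lemma conj_mult_eq_iff: "\<delta>' * x = k \<longleftrightarrow> x = - \<delta> * k"
  using delta_gt_1 unfolding \<delta>'_def by (auto simp: field_simps)

lemma beta1_bounds: "1 < beta1" "(\<delta> - 1) * (beta1 - 1) = 1"
  using delta_bounds unfolding beta1_def by (auto simp: field_simps)

lemma hi_minus_lo: "hi - lo = \<delta> + 1"
proof -
  have "(\<delta> + real m) * (\<delta> + 1) = (real m + 1) * (2 * \<delta> + 1)"
    using delta_sq by (simp add: algebra_simps power2_eq_square)
  then have "hi * (1 + 1 / \<delta>) = ((real m + 1) * (2 * \<delta> + 1)) / ((real m + 1) * \<delta>)"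
    using delta_gt_1 unfolding hi_def by (simp add: field_simps)
  also have "\<dots> = (2 * \<delta> + 1) / \<delta>"
    by (rule mult_divide_mult_cancel_left) simp
  also have "\<dots> = 2 + 1 / \<delta>"
    using delta_gt_1 by (simp add: field_simps)
  finally show ?thesis unfolding lo_def using delta_eq by (simp add: algebra_simps)
qed

lemma lo_div_delta: "- lo / \<delta> = hi - 1"
proof -
  have "(\<delta> + real m) * (\<delta>\<^sup>2 - 1) = (real m + 1) * (\<delta> * (\<delta> + real m))"
    using delta_sq by (simp add: algebra_simps)
  then have "hi * (\<delta>\<^sup>2 - 1) = \<delta> * (\<delta> + real m)"
    unfolding hi_def by (simp add: field_simps)
  then show ?thesis
    using delta_gt_1 unfolding lo_def by (simp add: field_simps power2_eq_square)
qed

lemma hi_gt_1: "1 < hi"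
  using delta_bounds unfolding hi_def by (simp add: field_simps)

lemma lo_plus_1_neg: "lo + 1 < 0"
proof -
  have "0 < hi / \<delta>" using hi_gt_1 delta_gt_1 by simp
  then show ?thesis unfolding lo_def using m_ge_1 by simp
qed

lemma digit1_frac: "0 \<le> beta1 * y - digit1 y" "beta1 * y - digit1 y < 1"
  unfolding digit1_def by linarith+

lemma digit1_cases:
  assumes "0 \<le> y" "y < 1"
  shows "digit1 y = 0 \<or> digit1 y = 1"
proof -
  have "beta1 * y < beta1" using assms beta1_bounds by simp
  moreover have "beta1 < 2" using delta_bounds unfolding beta1_def by (simp add: field_simps)
  moreover have "0 \<le> beta1 * y" using assms beta1_bounds by simp
  ultimately show ?thesis unfolding digit1_def by linarith
qed

lemma inverse_delta_le_if_digit1: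
  assumes "digit1 y = 1"
  shows "1 / \<delta> \<le> y"
proof -
  have "1 \<le> beta1 * y" using assms unfolding digit1_def by linarith
  then have "1 - 1 / \<delta> \<le> y"
    using delta_bounds unfolding beta1_def by (simp add: field_simps)
  moreover have "1 / \<delta> \<le> 1 - 1 / \<delta>" using delta_bounds by (simp add: field_simps)
  ultimately show ?thesis by linarith
qed

lemma digit2_bounds: "0 \<le> digit2 y" "digit2 y \<le> int m"
proof -
  have "0 \<le> (\<delta> - 1) * (beta1 * y - digit1 y)"
    using digit1_frac delta_gt_1 by simp
  then show "0 \<le> digit2 y" unfolding digit2_def by simp
  have "(\<delta> - 1) * (beta1 * y - digit1 y) < \<delta> - 1"
    using digit1_frac delta_gt_1 mult_strict_left_mono[of _ 1 "\<delta> - 1"] by simp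
  then show "digit2 y \<le> int m" unfolding digit2_def using delta_bounds by linarith
qed

lemma digit2_eq_0_if_digit1:
  assumes "y < 1" and "digit1 y = 1"
  shows "digit2 y = 0"
proof -
  have "beta1 * y - digit1 y < beta1 - 1" using assms beta1_bounds by simp
  then have "(\<delta> - 1) * (beta1 * y - digit1 y) < (\<delta> - 1) * (beta1 - 1)"
    using delta_gt_1 by simp
  then have "(\<delta> - 1) * (beta1 * y - digit1 y) < 1" using beta1_bounds by simp
  moreover have "0 \<le> (\<delta> - 1) * (beta1 * y - digit1 y)" using digit1_frac delta_gt_1 by simp
  ultimately show ?thesis unfolding digit2_def by (simp add: floor_eq_iff)
qed

lemma embed_step:
  assumes "q > 0" and root: "r\<^sup>2 = (real m + 1) * r + 1"
  shows "embed r q (step q P) = r * embed r q P - (r - 1) * digit1 (val q P) - digit2 (val q P)"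
proof -
  obtain S T where P: "P = (S, T)" by fastforce
  define a where "a = digit1 (val q P)"
  define c where "c = digit2 (val q P)"
  have "of_int T * r\<^sup>2 = of_int T * ((real m + 1) * r + 1)" using root by simp
  then have "of_int T + of_int S * r + of_int T * (real m + 1) * r = r * (of_int S + of_int T * r)"
    by (simp add: algebra_simps power2_eq_square)
  moreover have "embed r q (step q P)
      = (of_int T + of_int S * r + of_int T * (real m + 1) * r) / of_int q - (r - 1) * a - c"
    using assms unfolding step_def embed_def P a_def c_def by (simp add: field_simps)
  ultimately show ?thesis unfolding a_def c_def embed_def P by simp
qed

lemmas val_step = embed_step[OF _ delta_sq]
lemmas conj_val_step = embed_step[OF _ conj_sq]

lemma val_step_greedy:
  assumes "q > 0"
  shows "val q (step q P) = (\<delta> - 1) * (beta1 * val q P - digit1 (val q P))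
     - \<lfloor>(\<delta> - 1) * (beta1 * val q P - digit1 (val q P))\<rfloor>"
proof -
  have "(\<delta> - 1) * beta1 = \<delta>" using delta_gt_1 unfolding beta1_def by simp
  then have "(\<delta> - 1) * (beta1 * val q P) = \<delta> * val q P" by (metis mult.assoc)
  then have "(\<delta> - 1) * (beta1 * val q P - digit1 (val q P))
      = \<delta> * val q P - (\<delta> - 1) * digit1 (val q P)"
    by (simp add: algebra_simps)
  then show ?thesis using val_step[OF assms] unfolding digit2_def by simp
qed

text \<open>This is why the window may be narrowed above \<open>1/\<delta>\<close>: such a remainder never
  follows the second digit \<open>m\<close>.\<close>

lemma val_step_lt_if_digit2_max:
  assumes "q > 0" and "digit2 (val q P) = int m"
  shows "val q (step q P) < 1 / \<delta>"
proof -
  have "(\<delta> - 1) * (beta1 * val q P - digit1 (val q P)) < \<delta> - 1"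
    using digit1_frac delta_gt_1 mult_strict_left_mono[of _ 1 "\<delta> - 1"] by simp
  then show ?thesis
    using val_step_greedy[OF assms(1), of P] assms(2) delta_eq unfolding digit2_def by simp
qed

lemma admissible_step:
  assumes q: "q > 0" and adm: "admissible q P"
  shows "admissible q (step q P)"
proof -
  define y where "y = val q P"
  define yc where "yc = conj_val q P"
  define a where "a = digit1 y"
  define c where "c = digit2 y"
  have y: "0 \<le> y" "y < 1" and yc: "lo < yc" "yc < hi" "1 / \<delta> \<le> y \<Longrightarrow> lo + 1 < yc"
    using adm unfolding admissible_def y_def yc_def by auto
  have a: "a = 0 \<or> a = 1" using digit1_cases[OF y] unfolding a_def .
  have c: "0 \<le> c" "c \<le> int m" using digit2_bounds unfolding c_def by auto
  have yc': "conj_val q (step q P) = - (yc / \<delta>) + (1 + 1 / \<delta>) * a - c"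
    using conj_val_step[OF q, of P] unfolding yc_def a_def c_def y_def \<delta>'_def
    by (simp add: algebra_simps)
  have "yc / \<delta> < hi / \<delta>" using yc delta_gt_1 by (simp add: divide_strict_right_mono)
  moreover have "0 \<le> (1 + 1 / \<delta>) * a" using a delta_gt_1 by auto
  ultimately have lower: "- (hi / \<delta>) - c < conj_val q (step q P)" using yc' by linarith
  have "lo < conj_val q (step q P)"
    using lower c unfolding lo_def by linarith
  moreover have "lo + 1 < conj_val q (step q P)" if "1 / \<delta> \<le> val q (step q P)"
  proof -
    have "c \<noteq> int m"
      using that val_step_lt_if_digit2_max[OF q, of P] unfolding c_def y_def by auto
    then show ?thesis using lower c unfolding lo_def by linarith
  qed
  moreover have "conj_val q (step q P) < hi"
    using a
  proof
    assume "a = 0"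
    have "- (yc / \<delta>) < - (lo / \<delta>)" using yc delta_gt_1 by (simp add: divide_strict_right_mono)
    then show ?thesis using yc' \<open>a = 0\<close> c lo_div_delta by simp
  next
    assume "a = 1"
    then have "lo + 1 < yc" using yc inverse_delta_le_if_digit1 unfolding a_def by blast
    then have "(lo + 1) / \<delta> < yc / \<delta>" using delta_gt_1 by (simp add: divide_strict_right_mono)
    then have "- (yc / \<delta>) + (1 + 1 / \<delta>) < - (lo / \<delta>) + 1" by (simp add: add_divide_distrib)
    then show ?thesis using yc' \<open>a = 1\<close> c lo_div_delta by simp
  qed
  moreover have "0 \<le> val q (step q P)" "val q (step q P) < 1"
    using val_step_greedy[OF q, of P] by linarith+
  ultimately show ?thesis unfolding admissible_def by blast
qed

lemma eq_if_val_eq_conj_val_eq: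
  assumes "q > 0" and "val q P = val q Q" and "conj_val q P = conj_val q Q"
  shows "P = Q"
proof -
  obtain S T S' T' where P: "P = (S, T)" and Q: "Q = (S', T')" by fastforce
  have "of_int S + of_int T * \<delta> = of_int S' + of_int T' * \<delta>"
    and "of_int S + of_int T * \<delta>' = of_int S' + of_int T' * \<delta>'"
    using assms unfolding embed_def P Q by (simp_all add: divide_simps)
  then have "(of_int T - of_int T') * (\<delta> - \<delta>') = 0" by (simp add: algebra_simps)
  moreover have "\<delta> - \<delta>' \<noteq> 0" using conj_neg delta_gt_1 by simp
  ultimately have "T = T'" by simp
  with \<open>of_int S + of_int T * \<delta> = of_int S' + of_int T' * \<delta>\<close> have "S = S'" by simp
  with \<open>T = T'\<close> show ?thesis unfolding P Q by simp
qed

text \<open>Injectivity of the period map: equal images force equal digits, because a difference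
  in digits shifts the conjugate by at least \<open>hi - lo = \<delta> + 1\<close>.\<close>

lemma digit1_le_if_step_eq:
  assumes q: "q > 0" and adm: "admissible q P" "admissible q Q" and eq: "step q P = step q Q"
  shows "digit1 (val q P) \<le> digit1 (val q Q)"
proof (rule ccontr)
  define y where "y = val q P"
  define z where "z = val q Q"
  have y: "0 \<le> y" "y < 1" and z: "0 \<le> z" "z < 1"
    using adm unfolding admissible_def y_def z_def by auto
  assume "\<not> digit1 (val q P) \<le> digit1 (val q Q)"
  then have a: "digit1 y = 1" "digit1 z = 0"
    using digit1_cases[OF y] digit1_cases[OF z] unfolding y_def z_def by auto
  have "digit2 y = 0" using digit2_eq_0_if_digit1[OF y(2) a(1)] .
  then have "\<delta>' * (conj_val q P - conj_val q Q) = \<delta>' - 1 - digit2 z"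
    using conj_val_step[OF q, of P] conj_val_step[OF q, of Q] eq a
    unfolding y_def z_def by (simp add: algebra_simps)
  then have "conj_val q P - conj_val q Q = 1 + \<delta> + \<delta> * digit2 z"
    using delta_mult_conj unfolding conj_mult_eq_iff by (simp add: algebra_simps)
  moreover have "0 \<le> \<delta> * digit2 z" using digit2_bounds delta_gt_1 by simp
  ultimately show False using adm hi_minus_lo unfolding admissible_def by simp
qed

lemma digit2_le_if_step_eq:
  assumes q: "q > 0" and adm: "admissible q P" "admissible q Q" and eq: "step q P = step q Q"
    and a: "digit1 (val q P) = digit1 (val q Q)"
  shows "digit2 (val q P) \<le> digit2 (val q Q)"
proof (rule ccontr)
  define y where "y = val q P"
  define z where "z = val q Q"
  define k where "k = real_of_int (digit2 y - digit2 z)"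
  assume "\<not> digit2 (val q P) \<le> digit2 (val q Q)"
  then have k: "1 \<le> k" unfolding k_def y_def z_def by simp
  have "\<delta> * (y - z) = k"
    using val_step[OF q, of P] val_step[OF q, of Q] eq a
    unfolding y_def z_def k_def by (simp add: algebra_simps)
  then have "1 / \<delta> \<le> y - z" using k delta_gt_1 by (simp add: field_simps)
  moreover have "0 \<le> z" using adm unfolding admissible_def z_def by simp
  ultimately have "lo + 1 < conj_val q P" using adm unfolding admissible_def y_def by simp
  have "\<delta>' * (conj_val q P - conj_val q Q) = k"
    using conj_val_step[OF q, of P] conj_val_step[OF q, of Q] eq a
    unfolding y_def z_def k_def by (simp add: algebra_simps)
  then have "conj_val q Q - conj_val q P = \<delta> * k"
    unfolding conj_mult_eq_iff by simp
  moreover have "\<delta> \<le> \<delta> * k" using k delta_gt_1 by simp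
  ultimately show False
    using \<open>lo + 1 < conj_val q P\<close> adm hi_minus_lo unfolding admissible_def by simp
qed

lemma inj_on_step: "q > 0 \<Longrightarrow> inj_on (step q) {P. admissible q P}"
proof (rule inj_onI)
  fix P Q assume q: "q > 0" and "P \<in> {P. admissible q P}" "Q \<in> {P. admissible q P}"
    and eq: "step q P = step q Q"
  then have adm: "admissible q P" "admissible q Q" by auto
  have a: "digit1 (val q P) = digit1 (val q Q)"
    using digit1_le_if_step_eq[OF q adm eq] digit1_le_if_step_eq[OF q adm(2,1) eq[symmetric]]
    by simp
  have c: "digit2 (val q P) = digit2 (val q Q)"
    using digit2_le_if_step_eq[OF q adm eq a] digit2_le_if_step_eq[OF q adm(2,1) eq[symmetric] a[symmetric]]
    by simp
  have "val q (step q P) = val q (step q Q)" and "conj_val q (step q P) = conj_val q (step q Q)"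
    using eq by simp_all
  then have "\<delta> * val q P = \<delta> * val q Q" and "\<delta>' * conj_val q P = \<delta>' * conj_val q Q"
    unfolding val_step[OF q] conj_val_step[OF q] a c by simp_all
  then have "val q P = val q Q" and "conj_val q P = conj_val q Q"
    using delta_gt_1 conj_neg by simp_all
  then show "P = Q" using eq_if_val_eq_conj_val_eq[OF q] by blast
qed

lemma finite_admissible:
  assumes q: "q > 0"
  shows "finite {P. admissible q P}"
proof -
  define B where "B = real_of_int q * (1 - lo + hi)"
  define N where "N = \<lceil>real_of_int q + B * \<delta>\<rceil>"
  have "{P. admissible q P} \<subseteq> {-N..N} \<times> {-N..N}"
  proof
    fix P assume "P \<in> {P. admissible q P}"
    then have v: "0 \<le> val q P" "val q P < 1" and c: "lo < conj_val q P" "conj_val q P < hi"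
      unfolding admissible_def by auto
    obtain S T where P: "P = (S, T)" by fastforce
    have qv: "real_of_int q * val q P = of_int S + of_int T * \<delta>"
      and qc: "real_of_int q * conj_val q P = of_int S + of_int T * \<delta>'"
      using q unfolding embed_def P by simp_all
    have "\<bar>val q P - conj_val q P\<bar> \<le> 1 - lo + hi"
      using v c hi_gt_1 lo_plus_1_neg by (simp add: abs_le_iff)
    then have "\<bar>real_of_int q * (val q P - conj_val q P)\<bar> \<le> B"
      unfolding B_def using q by (simp add: abs_mult)
    moreover have "real_of_int q * (val q P - conj_val q P) = of_int T * (\<delta> - \<delta>')"
      using qv qc by (simp add: algebra_simps)
    moreover have "\<bar>real_of_int T\<bar> \<le> \<bar>real_of_int T * (\<delta> - \<delta>')\<bar>"
      using mult_left_mono[of 1 "\<delta> - \<delta>'" "\<bar>real_of_int T\<bar>"] delta_gt_1 conj_neg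
      by (simp add: abs_mult)
    ultimately have T: "\<bar>real_of_int T\<bar> \<le> B" by linarith
    then have "\<bar>real_of_int T * \<delta>\<bar> \<le> B * \<delta>"
      using delta_gt_1 by (simp add: abs_mult mult_right_mono)
    moreover have "\<bar>real_of_int q * val q P\<bar> \<le> real_of_int q"
      using v q by (simp add: abs_mult)
    ultimately have S: "\<bar>real_of_int S\<bar> \<le> real_of_int q + B * \<delta>" using qv by linarith
    have "B \<le> B * \<delta>"
      using T delta_gt_1 mult_left_mono[of 1 \<delta> B] by simp
    then have "\<bar>S\<bar> \<le> N" "\<bar>T\<bar> \<le> N" using S T q unfolding N_def by linarith+
    then show "P \<in> {-N..N} \<times> {-N..N}" unfolding P by auto
  qed
  then show ?thesis by (rule finite_subset) simp
qed

lemma admissible_start: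
  assumes "q > 0" and "0 \<le> val q (p, 0)" and "val q (p, 0) < 1"
  shows "admissible q (p, 0)"
proof -
  have "conj_val q (p, 0) = val q (p, 0)" unfolding embed_def by simp
  then show ?thesis
    unfolding admissible_def using assms hi_gt_1 lo_plus_1_neg by auto
qed

lemma alt_rem_double_eq_val_funpow_step:
  assumes b_odd: "\<And>k. odd k \<Longrightarrow> b k = beta1" and b_even: "\<And>k. even k \<Longrightarrow> b k = \<delta> - 1"
    and q: "q > 0"
  shows "alt_rem b (val q P) (2 * k) = val q ((step q ^^ k) P)"
proof (induction k)
  case (Suc k)
  have "2 * Suc k = Suc (Suc (2 * k))" by simp
  moreover have "b (Suc (2 * k)) = beta1" and "b (Suc (Suc (2 * k))) = \<delta> - 1"
    using b_odd b_even by simp_all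
  ultimately show ?case
    using Suc.IH val_step_greedy[OF q, of "(step q ^^ k) P"] by (simp add: digit1_def)
qed simp

lemma purely_periodic_exp_rational:
  assumes b_odd: "\<And>k. odd k \<Longrightarrow> b k = beta1" and b_even: "\<And>k. even k \<Longrightarrow> b k = \<delta> - 1"
    and x: "x \<in> \<rat>" "0 \<le> x" "x < 1"
  shows "purely_periodic_exp b x"
proof -
  obtain p q where q: "q > 0" and x_eq: "x = of_int p / of_int q"
    using x(1) by (auto elim: Rats_cases')
  have val: "val q (p, 0) = x" unfolding embed_def x_eq by simp
  then have "admissible q (p, 0)" using admissible_start[OF q] x by simp
  then obtain n where "n \<ge> 1" and returns: "(step q ^^ n) (p, 0) = (p, 0)"
    using funpow_returns_if_inj_on_finite[OF finite_admissible[OF q] _ inj_on_step[OF q]]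
      admissible_step[OF q] by blast
  have "alt_rem b x (2 * n) = x"
    using alt_rem_double_eq_val_funpow_step[OF b_odd b_even q, where P = "(p, 0)" and k = n] returns val by simp
  moreover have "b (k + 2 * n) = b k" for k
    by (cases "odd k") (simp_all add: b_odd b_even)
  ultimately show ?thesis
    using purely_periodic_exp_if_rem_returns[of "2 * n"] \<open>n \<ge> 1\<close> by simp
qed

end

theorem mainTheorem10:
  fixes m :: nat and \<delta> :: real and b :: "nat \<Rightarrow> real"
  assumes "m \<ge> 1"
    and "\<delta> > 1" and "\<delta>^2 - (real m + 1) * \<delta> - 1 = 0"
    and "\<And>k. odd k \<Longrightarrow> b k = \<delta> / (\<delta> - 1)"
    and "\<And>k. even k \<Longrightarrow> b k = \<delta> - 1"
  shows "(\<forall>x\<in>\<rat>. 0 \<le> x \<and> x < 1 \<longrightarrow> purely_periodic_exp b x) \<and> alt_gamma b = 1"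
proof -
  interpret delta_alt_base m \<delta>
    using assms(1-3) by unfold_locales
  have "\<forall>x\<in>\<rat>. 0 \<le> x \<and> x < 1 \<longrightarrow> purely_periodic_exp b x"
    using purely_periodic_exp_rational assms(4,5) unfolding beta1_def by blast
  then show ?thesis using alt_gamma_eq_1_if_all_rationals_periodic by blast
qed

end
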